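(* The variety $\mathsf{V}(S_{(4,471)})$ is the ai-semiring variety defined by the identities $xy\approx yx$, $x^2\approx x^2+xy$, $x_1\approx x_1+x_2x_3x_4$.
   Context: An ai-semiring is an algebra $(S,+,\cdot)$ with $(S,+)$ a semilattice, $(S,\cdot)$ a semigroup, and both distributive laws. $\mathsf{V}(S)$ is the variety generated by $S$; "the ai-semiring variety defined by identities $\Sigma$" is the class of all ai-semirings satisfying $\Sigma$ (equivalently, an identity holds in $S$ iff it follows from $\Sigma$ and the ai-semiring axioms). $S_{(4,471)}$ has carrier $\{1,2,3,4\}$; addition: $x+x=x$, $2+x=x$, $1+x=1$ for all $x$, $3+4=1$; multiplication (row $a$, column $b$ gives $a\cdot b$): row $1$: $3,2,2,3$; row $2$: $2,2,2,2$; row $3$: $2,2,2,2$; row $4$: $3,2,2,3$. *)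

theory Defs
  imports Main
begin

datatype trm = Var nat | Plus trm trm (infixl "\<oplus>" 65) | Times trm trm (infixl "\<odot>" 70)

fun subst :: "(nat \<Rightarrow> trm) \<Rightarrow> trm \<Rightarrow> trm" where
  "subst \<sigma> (Var n) = \<sigma> n"
| "subst \<sigma> (Plus a b) = Plus (subst \<sigma> a) (subst \<sigma> b)"
| "subst \<sigma> (Times a b) = Times (subst \<sigma> a) (subst \<sigma> b)"

definition ai_semiring_axioms :: "(trm \<times> trm) set" where
  "ai_semiring_axioms =
    { (Var 0 \<oplus> Var 0, Var 0),
      (Var 0 \<oplus> Var 1, Var 1 \<oplus> Var 0),
      ((Var 0 \<oplus> Var 1) \<oplus> Var 2, Var 0 \<oplus> (Var 1 \<oplus> Var 2)),
      ((Var 0 \<odot> Var 1) \<odot> Var 2, Var 0 \<odot> (Var 1 \<odot> Var 2)),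
      (Var 0 \<odot> (Var 1 \<oplus> Var 2), Var 0 \<odot> Var 1 \<oplus> Var 0 \<odot> Var 2),
      ((Var 0 \<oplus> Var 1) \<odot> Var 2, Var 0 \<odot> Var 2 \<oplus> Var 1 \<odot> Var 2) }"

definition Sigma_4_471 :: "(trm \<times> trm) set" where
  "Sigma_4_471 =
    { (Var 0 \<odot> Var 1, Var 1 \<odot> Var 0),
      (Var 0 \<odot> Var 0, Var 0 \<odot> Var 0 \<oplus> Var 0 \<odot> Var 1),
      (Var 1, Var 1 \<oplus> Var 2 \<odot> Var 3 \<odot> Var 4) }"

inductive derivable :: "(trm \<times> trm) set \<Rightarrow> trm \<Rightarrow> trm \<Rightarrow> bool" for E where
  ax: "(l, r) \<in> E \<Longrightarrow> derivable E (subst \<sigma> l) (subst \<sigma> r)"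
| refl: "derivable E t t"
| sym: "derivable E s t \<Longrightarrow> derivable E t s"
| trans: "derivable E s t \<Longrightarrow> derivable E t u \<Longrightarrow> derivable E s u"
| cong_plus: "derivable E s t \<Longrightarrow> derivable E s' t' \<Longrightarrow> derivable E (Plus s s') (Plus t t')"
| cong_times: "derivable E s t \<Longrightarrow> derivable E s' t' \<Longrightarrow> derivable E (Times s s') (Times t t')"

datatype el = E1 | E2 | E3 | E4

fun addS :: "el \<Rightarrow> el \<Rightarrow> el" where
  "addS E1 _ = E1"
| "addS _ E1 = E1"
| "addS E2 x = x"
| "addS x E2 = x"
| "addS E3 E3 = E3"
| "addS E4 E4 = E4"
| "addS E3 E4 = E1"
| "addS E4 E3 = E1"

fun mulS :: "el \<Rightarrow> el \<Rightarrow> el" where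
  "mulS E1 E1 = E3" | "mulS E1 E2 = E2" | "mulS E1 E3 = E2" | "mulS E1 E4 = E3"
| "mulS E2 _ = E2"
| "mulS E3 _ = E2"
| "mulS E4 E1 = E3" | "mulS E4 E2 = E2" | "mulS E4 E3 = E2" | "mulS E4 E4 = E3"

fun evalS :: "(nat \<Rightarrow> el) \<Rightarrow> trm \<Rightarrow> el" where
  "evalS \<rho> (Var n) = \<rho> n"
| "evalS \<rho> (Plus a b) = addS (evalS \<rho> a) (evalS \<rho> b)"
| "evalS \<rho> (Times a b) = mulS (evalS \<rho> a) (evalS \<rho> b)"

definition holds_in_S :: "trm \<Rightarrow> trm \<Rightarrow> bool" where
  "holds_in_S u v \<longleftrightarrow> (\<forall>\<rho>. evalS \<rho> u = evalS \<rho> v)"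

end

(* Modulo the identities, every term is a sum of variables, of quadratic monomials and of
   longer products.  Longer products are absorbed by every term (x1 = x1 + x2 x3 x4), and by
   commutativity and x^2 = x^2 + xy a monomial ab is absorbed by each of ab, ba, aa, bb.  Hence
   u = u + v is derivable as soon as every variable summand x of v is one of u and, for every
   product summand ab of v and variable summands x of a and y of b, u has a product summand
   with variable summands p, q in {x, y}.
   Both conditions are detected in S.  Its addition is the join of the four-element Boolean
   lattice with atoms 3 and 4; under the assignment sending x, y to 4 and every other variable
   to 2, a term evaluates above 4 iff it has a variable summand among x, y, and above 3 iff it
   has such a product summand.  So an identity u = v of S yields u = u + v and v = v + u, hence
   u = v; soundness is a finite check of the axioms in S. *)

theory Submission
  imports Defs
begin

declare derivable.trans [trans]

lemma derivable_instance:
  assumes "(l, r) \<in> E" "subst \<sigma> l = a" "subst \<sigma> r = b"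
  shows "derivable E a b"
  using derivable.ax[OF assms(1), of \<sigma>] assms(2,3) by simp

locale ai_semiring_theory =
  fixes E :: "(trm \<times> trm) set"
  assumes ai_axioms: "ai_semiring_axioms \<subseteq> E"
begin

abbreviation provable_eq :: "trm \<Rightarrow> trm \<Rightarrow> bool" (infix "\<approx>" 50) where
  "u \<approx> v \<equiv> derivable E u v"

lemma ai_axiom_instance:
  assumes "(l, r) \<in> ai_semiring_axioms" "subst \<sigma> l = a" "subst \<sigma> r = b"
  shows "a \<approx> b"
  using assms ai_axioms derivable_instance by blast

lemma plus_idem: "a \<oplus> a \<approx> a"
  by (rule ai_axiom_instance[of "Var 0 \<oplus> Var 0" "Var 0" "nth [a]"])
    (simp_all add: ai_semiring_axioms_def)

lemma plus_comm: "a \<oplus> b \<approx> b \<oplus> a"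
  by (rule ai_axiom_instance[of "Var 0 \<oplus> Var 1" "Var 1 \<oplus> Var 0" "nth [a, b]"])
    (simp_all add: ai_semiring_axioms_def)

lemma plus_assoc: "a \<oplus> b \<oplus> c \<approx> a \<oplus> (b \<oplus> c)"
  by (rule ai_axiom_instance
      [of "Var 0 \<oplus> Var 1 \<oplus> Var 2" "Var 0 \<oplus> (Var 1 \<oplus> Var 2)" "nth [a, b, c]"])
    (simp_all add: ai_semiring_axioms_def)

lemma times_assoc: "a \<odot> b \<odot> c \<approx> a \<odot> (b \<odot> c)"
  by (rule ai_axiom_instance
      [of "Var 0 \<odot> Var 1 \<odot> Var 2" "Var 0 \<odot> (Var 1 \<odot> Var 2)" "nth [a, b, c]"])
    (simp_all add: ai_semiring_axioms_def)

lemma times_distrib_left: "a \<odot> (b \<oplus> c) \<approx> a \<odot> b \<oplus> a \<odot> c"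
  by (rule ai_axiom_instance
      [of "Var 0 \<odot> (Var 1 \<oplus> Var 2)" "Var 0 \<odot> Var 1 \<oplus> Var 0 \<odot> Var 2" "nth [a, b, c]"])
    (simp_all add: ai_semiring_axioms_def)

lemma times_distrib_right: "(a \<oplus> b) \<odot> c \<approx> a \<odot> c \<oplus> b \<odot> c"
  by (rule ai_axiom_instance
      [of "(Var 0 \<oplus> Var 1) \<odot> Var 2" "Var 0 \<odot> Var 2 \<oplus> Var 1 \<odot> Var 2" "nth [a, b, c]"])
    (simp_all add: ai_semiring_axioms_def)

definition absorbs :: "trm \<Rightarrow> trm \<Rightarrow> bool" where
  "absorbs u v \<longleftrightarrow> u \<approx> u \<oplus> v"

lemma absorbs_if_provable: "u \<approx> v \<Longrightarrow> absorbs u v"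
  unfolding absorbs_def by (meson derivable.intros plus_idem)

lemma absorbs_refl: "absorbs u u"
  by (rule absorbs_if_provable[OF derivable.refl])

lemma absorbs_cong_left: "u \<approx> u' \<Longrightarrow> absorbs u v \<Longrightarrow> absorbs u' v"
  unfolding absorbs_def by (meson derivable.intros)

lemma absorbs_cong_right: "v \<approx> v' \<Longrightarrow> absorbs u v' \<Longrightarrow> absorbs u v"
  unfolding absorbs_def by (meson derivable.intros)

lemma absorbs_trans:
  assumes uv: "absorbs u v" and vw: "absorbs v w"
  shows "absorbs u w"
proof -
  have "u \<approx> u \<oplus> v"
    using uv unfolding absorbs_def .
  also have "\<dots> \<approx> u \<oplus> (v \<oplus> w)"
    using vw unfolding absorbs_def by (rule derivable.cong_plus[OF derivable.refl])
  also have "\<dots> \<approx> u \<oplus> v \<oplus> w"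
    by (rule derivable.sym[OF plus_assoc])
  also have "\<dots> \<approx> u \<oplus> w"
    using uv unfolding absorbs_def by (rule derivable.cong_plus[OF derivable.sym derivable.refl])
  finally show ?thesis
    unfolding absorbs_def .
qed

lemma absorbs_plus:
  assumes ua: "absorbs u a" and ub: "absorbs u b"
  shows "absorbs u (a \<oplus> b)"
proof -
  have "u \<approx> u \<oplus> a"
    using ua unfolding absorbs_def .
  also have "\<dots> \<approx> u \<oplus> b \<oplus> a"
    using ub unfolding absorbs_def by (rule derivable.cong_plus[OF _ derivable.refl])
  also have "\<dots> \<approx> u \<oplus> (b \<oplus> a)"
    by (rule plus_assoc)
  also have "\<dots> \<approx> u \<oplus> (a \<oplus> b)"
    by (rule derivable.cong_plus[OF derivable.refl plus_comm])
  finally show ?thesis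
    unfolding absorbs_def .
qed

lemma plus_absorbs_left: "absorbs (a \<oplus> b) a"
proof -
  have "a \<oplus> b \<oplus> a \<approx> a \<oplus> (b \<oplus> a)"
    by (rule plus_assoc)
  also have "\<dots> \<approx> a \<oplus> (a \<oplus> b)"
    by (rule derivable.cong_plus[OF derivable.refl plus_comm])
  also have "\<dots> \<approx> a \<oplus> a \<oplus> b"
    by (rule derivable.sym[OF plus_assoc])
  also have "\<dots> \<approx> a \<oplus> b"
    by (rule derivable.cong_plus[OF plus_idem derivable.refl])
  finally show ?thesis
    unfolding absorbs_def by (rule derivable.sym)
qed

lemma plus_absorbs_right: "absorbs (a \<oplus> b) b"
  using absorbs_cong_left[OF plus_comm plus_absorbs_left] .

lemma absorbs_times:
  assumes aa': "absorbs a a'" and bb': "absorbs b b'"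
  shows "absorbs (a \<odot> b) (a' \<odot> b')"
proof -
  have "(a \<oplus> a') \<odot> (b \<oplus> b') \<approx> a \<odot> (b \<oplus> b') \<oplus> a' \<odot> (b \<oplus> b')"
    by (rule times_distrib_right)
  also have "\<dots> \<approx> (a \<odot> b \<oplus> a \<odot> b') \<oplus> (a' \<odot> b \<oplus> a' \<odot> b')"
    by (rule derivable.cong_plus[OF times_distrib_left times_distrib_left])
  finally have "absorbs ((a \<oplus> a') \<odot> (b \<oplus> b')) (a' \<odot> b')"
    by (rule absorbs_cong_left[OF derivable.sym absorbs_trans[OF plus_absorbs_right plus_absorbs_right]])
  moreover have "(a \<oplus> a') \<odot> (b \<oplus> b') \<approx> a \<odot> b"
    using aa' bb' unfolding absorbs_def by (rule derivable.sym[OF derivable.cong_times])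
  ultimately show ?thesis
    by (rule absorbs_cong_left[rotated])
qed

lemma absorbs_antisym: "absorbs u v \<Longrightarrow> absorbs v u \<Longrightarrow> u \<approx> v"
  unfolding absorbs_def by (meson derivable.sym derivable.trans plus_comm)

end

fun var_summands :: "trm \<Rightarrow> nat set" where
  "var_summands (Var x) = {x}"
| "var_summands (a \<oplus> b) = var_summands a \<union> var_summands b"
| "var_summands (a \<odot> b) = {}"

fun pair_summands :: "trm \<Rightarrow> (nat \<times> nat) set" where
  "pair_summands (Var x) = {}"
| "pair_summands (a \<oplus> b) = pair_summands a \<union> pair_summands b"
| "pair_summands (a \<odot> b) = var_summands a \<times> var_summands b"

context ai_semiring_theory
begin

lemma absorbs_var_summand: "x \<in> var_summands u \<Longrightarrow> absorbs u (Var x)"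
  by (induction u)
    (auto intro: absorbs_refl absorbs_trans[OF plus_absorbs_left] absorbs_trans[OF plus_absorbs_right])

lemma absorbs_pair_summand: "(x, y) \<in> pair_summands u \<Longrightarrow> absorbs u (Var x \<odot> Var y)"
  by (induction u)
    (auto intro: absorbs_times absorbs_var_summand
      absorbs_trans[OF plus_absorbs_left] absorbs_trans[OF plus_absorbs_right])

end

locale sigma_4_471_theory = ai_semiring_theory +
  assumes sigma_axioms: "Sigma_4_471 \<subseteq> E"
begin

lemma sigma_axiom_instance:
  assumes "(l, r) \<in> Sigma_4_471" "subst \<sigma> l = a" "subst \<sigma> r = b"
  shows "a \<approx> b"
  using assms sigma_axioms derivable_instance by blast

lemma times_comm: "a \<odot> b \<approx> b \<odot> a"
  by (rule sigma_axiom_instance[of "Var 0 \<odot> Var 1" "Var 1 \<odot> Var 0" "nth [a, b]"])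
    (simp_all add: Sigma_4_471_def)

lemma square_absorbs: "absorbs (a \<odot> a) (a \<odot> b)"
  unfolding absorbs_def
  by (rule sigma_axiom_instance[of "Var 0 \<odot> Var 0" "Var 0 \<odot> Var 0 \<oplus> Var 0 \<odot> Var 1" "nth [a, b]"])
    (simp_all add: Sigma_4_471_def)

lemma absorbs_triple_product: "absorbs u (a \<odot> b \<odot> c)"
  unfolding absorbs_def
  by (rule sigma_axiom_instance[of "Var 1" "Var 1 \<oplus> Var 2 \<odot> Var 3 \<odot> Var 4" "nth [u, u, a, b, c]"])
    (simp_all add: Sigma_4_471_def)

lemma product_absorbs_product_on_same_factors:
  assumes "p \<in> {a, b}" "q \<in> {a, b}"
  shows "absorbs (p \<odot> q) (a \<odot> b)"
  using assms
  by (auto intro: absorbs_refl absorbs_if_provable times_comm square_absorbs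
      absorbs_trans[OF square_absorbs absorbs_if_provable[OF times_comm]])

lemma absorbs_product_if_absorbs_pairs:
  assumes "\<forall>x\<in>var_summands a. \<forall>y\<in>var_summands b. absorbs u (Var x \<odot> Var y)"
  shows "absorbs u (a \<odot> b)"
  using assms
proof (induction a arbitrary: b)
  case (Var x)
  then show ?case
  proof (induction b)
    case (Var y)
    then show ?case by simp
  next
    case (Plus b1 b2)
    then have "absorbs u (Var x \<odot> b1 \<oplus> Var x \<odot> b2)"
      by (intro absorbs_plus) auto
    then show ?case
      by (rule absorbs_cong_right[OF times_distrib_left])
  next
    case (Times c d)
    show ?case
      by (rule absorbs_cong_right[OF derivable.sym[OF times_assoc] absorbs_triple_product])
  qed
next
  case (Plus a1 a2)
  then have "absorbs u (a1 \<odot> b \<oplus> a2 \<odot> b)"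
    by (intro absorbs_plus) auto
  then show ?case
    by (rule absorbs_cong_right[OF times_distrib_right])
next
  case (Times c d)
  show ?case
    by (rule absorbs_triple_product)
qed

end

text \<open>Membership in \<open>{E1, E4}\<close> and in \<open>{E1, E3}\<close> are the two coordinates of the
  Boolean lattice \<open>(S, addS)\<close>.\<close>

lemma addS_in_E1_E4_iff: "addS a b \<in> {E1, E4} \<longleftrightarrow> a \<in> {E1, E4} \<or> b \<in> {E1, E4}"
  by (cases a; cases b) auto

lemma addS_in_E1_E3_iff: "addS a b \<in> {E1, E3} \<longleftrightarrow> a \<in> {E1, E3} \<or> b \<in> {E1, E3}"
  by (cases a; cases b) auto

lemma mulS_notin_E1_E4: "mulS a b \<notin> {E1, E4}"
  by (cases a; cases b) auto

lemma mulS_in_E1_E3_iff: "mulS a b \<in> {E1, E3} \<longleftrightarrow> a \<in> {E1, E4} \<and> b \<in> {E1, E4}"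
  by (cases a; cases b) auto

lemma evalS_in_E1_E4_iff:
  "evalS \<rho> t \<in> {E1, E4} \<longleftrightarrow> (\<exists>x\<in>var_summands t. \<rho> x \<in> {E1, E4})"
  by (induction t) (auto simp: addS_in_E1_E4_iff mulS_notin_E1_E4 simp del: insert_iff)

lemma evalS_in_E1_E3_iff:
  assumes "\<forall>x. \<rho> x \<notin> {E1, E3}"
  shows "evalS \<rho> t \<in> {E1, E3} \<longleftrightarrow>
    (\<exists>(x, y)\<in>pair_summands t. \<rho> x \<in> {E1, E4} \<and> \<rho> y \<in> {E1, E4})"
proof (induction t)
  case (Plus a b)
  then show ?case
    by (simp only: evalS.simps addS_in_E1_E3_iff pair_summands.simps bex_Un)
next
  case (Times a b)
  then show ?case
    by (simp only: evalS.simps mulS_in_E1_E3_iff evalS_in_E1_E4_iff pair_summands.simps) blast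
qed (use assms in simp)

definition absorbs_in_S :: "trm \<Rightarrow> trm \<Rightarrow> bool" where
  "absorbs_in_S u v \<longleftrightarrow> (\<forall>\<rho>. addS (evalS \<rho> u) (evalS \<rho> v) = evalS \<rho> u)"

lemma absorbs_in_S_plusD:
  assumes "absorbs_in_S u (a \<oplus> b)"
  shows "absorbs_in_S u a" "absorbs_in_S u b"
proof -
  have "addS x (addS y z) = x \<Longrightarrow> addS x y = x \<and> addS x z = x" for x y z
    by (cases x; cases y; cases z) auto
  then show "absorbs_in_S u a" "absorbs_in_S u b"
    using assms unfolding absorbs_in_S_def evalS.simps by blast+
qed

lemma var_summand_if_absorbs_in_S:
  assumes "absorbs_in_S u (Var x)"
  shows "x \<in> var_summands u"
proof -
  define \<rho> where "\<rho> n = (if n = x then E4 else E2)" for n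
  have "addS (evalS \<rho> u) E4 = evalS \<rho> u"
    using assms[unfolded absorbs_in_S_def, rule_format, of \<rho>] by (simp add: \<rho>_def)
  then have "evalS \<rho> u \<in> {E1, E4}"
    by (cases "evalS \<rho> u") auto
  then obtain p where "p \<in> var_summands u" "\<rho> p \<in> {E1, E4}"
    unfolding evalS_in_E1_E4_iff ..
  then show ?thesis
    by (simp add: \<rho>_def split: if_splits)
qed

lemma pair_summand_if_absorbs_in_S:
  assumes "absorbs_in_S u (a \<odot> b)" "x \<in> var_summands a" "y \<in> var_summands b"
  shows "\<exists>(p, q)\<in>pair_summands u. p \<in> {x, y} \<and> q \<in> {x, y}"
proof -
  define \<rho> where "\<rho> n = (if n \<in> {x, y} then E4 else E2)" for n
  have \<rho>_E4_iff: "\<rho> n \<in> {E1, E4} \<longleftrightarrow> n \<in> {x, y}" for n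
    by (simp add: \<rho>_def)
  have "evalS \<rho> (a \<odot> b) \<in> {E1, E3}"
    using assms(2,3)
    by (auto simp: mulS_in_E1_E3_iff evalS_in_E1_E4_iff \<rho>_E4_iff simp del: insert_iff)
  moreover have "addS (evalS \<rho> u) (evalS \<rho> (a \<odot> b)) = evalS \<rho> u"
    using assms(1) by (simp add: absorbs_in_S_def)
  ultimately have "evalS \<rho> u \<in> {E1, E3}"
    by (metis addS_in_E1_E3_iff)
  moreover have "\<forall>n. \<rho> n \<notin> {E1, E3}"
    by (simp add: \<rho>_def)
  ultimately show ?thesis
    by (simp add: evalS_in_E1_E3_iff \<rho>_E4_iff del: insert_iff)
qed

context sigma_4_471_theory
begin

lemma absorbs_if_absorbs_in_S: "absorbs_in_S u v \<Longrightarrow> absorbs u v"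
proof (induction v)
  case (Var x)
  then show ?case
    by (intro absorbs_var_summand var_summand_if_absorbs_in_S)
next
  case (Plus a b)
  then show ?case
    using absorbs_in_S_plusD[OF Plus.prems] by (blast intro: absorbs_plus)
next
  case (Times a b)
  show ?case
  proof (rule absorbs_product_if_absorbs_pairs, intro ballI)
    fix x y
    assume "x \<in> var_summands a" "y \<in> var_summands b"
    then obtain p q where pq: "(p, q) \<in> pair_summands u" "p \<in> {x, y}" "q \<in> {x, y}"
      using pair_summand_if_absorbs_in_S[OF Times.prems] by blast
    have "absorbs u (Var p \<odot> Var q)"
      using pq(1) by (rule absorbs_pair_summand)
    moreover have "absorbs (Var p \<odot> Var q) (Var x \<odot> Var y)"
      using pq(2,3) by (intro product_absorbs_product_on_same_factors) auto
    ultimately show "absorbs u (Var x \<odot> Var y)"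
      by (rule absorbs_trans)
  qed
qed

end

lemma evalS_subst: "evalS \<rho> (subst \<sigma> t) = evalS (\<lambda>n. evalS \<rho> (\<sigma> n)) t"
  by (induction t) auto

lemma holds_in_S_if_derivable:
  assumes "\<forall>(l, r)\<in>E. holds_in_S l r" "derivable E u v"
  shows "holds_in_S u v"
  using assms(2) unfolding holds_in_S_def
proof (induction rule: derivable.induct)
  case (ax l r \<sigma>)
  then have "holds_in_S l r"
    using assms(1) by blast
  then show ?case
    by (simp add: holds_in_S_def evalS_subst)
qed auto

lemma S_is_ai_semiring:
  "addS a a = a"
  "addS a b = addS b a"
  "addS (addS a b) c = addS a (addS b c)"
  "mulS (mulS a b) c = mulS a (mulS b c)"
  "mulS a (addS b c) = addS (mulS a b) (mulS a c)"
  "mulS (addS a b) c = addS (mulS a c) (mulS b c)"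
  by (cases a; cases b; cases c; simp)+

lemma S_satisfies_Sigma:
  "mulS a b = mulS b a"
  "mulS a a = addS (mulS a a) (mulS a b)"
  "b = addS b (mulS (mulS c d) e)"
  by (cases a; cases b; cases c; cases d; cases e; simp)+

lemma S_satisfies_axioms: "\<forall>(l, r)\<in>ai_semiring_axioms \<union> Sigma_4_471. holds_in_S l r"
  by (auto simp: holds_in_S_def ai_semiring_axioms_def Sigma_4_471_def S_is_ai_semiring(1,3-6)
      intro: S_is_ai_semiring(2) S_satisfies_Sigma(1,2)
        S_satisfies_Sigma(3)[unfolded S_is_ai_semiring(4)])

interpretation sigma: sigma_4_471_theory "ai_semiring_axioms \<union> Sigma_4_471"
  by unfold_locales auto

theorem proposition2p5:
  shows "\<forall>u v. holds_in_S u v \<longleftrightarrow>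
           derivable (ai_semiring_axioms \<union> Sigma_4_471) u v"
proof (intro allI iffI)
  fix u v
  assume "holds_in_S u v"
  then have "absorbs_in_S u v" "absorbs_in_S v u"
    by (simp_all add: holds_in_S_def absorbs_in_S_def S_is_ai_semiring(1))
  then show "derivable (ai_semiring_axioms \<union> Sigma_4_471) u v"
    by (intro sigma.absorbs_antisym sigma.absorbs_if_absorbs_in_S)
next
  fix u v
  assume "derivable (ai_semiring_axioms \<union> Sigma_4_471) u v"
  then show "holds_in_S u v"
    by (rule holds_in_S_if_derivable[OF S_satisfies_axioms])
qed

end
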